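(* Let $x\in X(l_1,\dots,l_n,l_\infty)$ and let $S\subseteq\{1,\dots,n\}$ be a set of indices with $l_i$ equal for all $i\in S$. For every permutation $\sigma$ of $S$, the diagram obtained from $x$ by moving each label $z_i$, $i\in S$, to the position originally occupied by $z_{\sigma(i)}$ (keeping all other labels and the unlabelled arc configuration unchanged) lies in the same $J_n$-orbit as $x$.
   Context: Cactus group: $J_n$ is the group generated by $s_{p,q}$, $1\le p<q\le n$, subject to the relations $s_{p,q}^2=e$; $s_{p,q}s_{p',q'}=s_{p',q'}s_{p,q}$ if $[p,q]$ and $[p',q']$ are disjoint; $s_{p,q}s_{p',q'}s_{p,q}=s_{p+q-q',p+q-p'}$ if $p\le p'<q'\le q$. Arc diagrams: fix nonnegative integers $l_1,\dots,l_n,l_\infty$. On the boundary circle of a closed disc place $n+1$ marked positions: position $0$ (occupied by $z_\infty$) and positions $1,\dots,n$ following it clockwise. An arc diagram is a bijective assignment of labels $z_1,\dots,z_n$ to positions $1,\dots,n$ together with a finite collection of simple arcs in the disc, pairwise disjoint except at endpoints, each joining two distinct marked points, such that $z_j$ is an endpoint of exactly $l_j$ arcs ($j\in\{1,\dots,n,\infty\}$; $l_j$ is the valence). Parallel arcs are allowed; diagrams are up to isotopy, equivalently determined by the labelling and the number of arcs between each pair of marked points. $X(l_1,\dots,l_n,l_\infty)$ is the set of such diagrams. Action: $s_{p,q}$ ($1\le p<q\le n$) acts by cutting off positions $p,\dots,q$ with a chord $\ell$ (arcs isotoped to cross $\ell$ at most once), reflecting that region by the reflection reversing $\ell$ (label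 at position $p+t$ goes to position $q-t$, crossing points on $\ell$ reversed), leaving the rest unchanged and reconnecting arcs at $\ell$. Words act right to left; this is an action of $J_n$. *)

theory Defs
  imports "HOL-Combinatorics.Permutations"
begin

text \<open>
Marked positions on the boundary circle are 0,1,...,n in clockwise
order; position 0 carries z_infinity.  A diagram is a pair (lab, m) where
  lab pos = j  means that label z_j sits at position pos (1 <= pos <= n),
  m a b      is the number of arcs joining positions a and b.
Canonical conventions: lab pos = 0 for pos outside {1..n}; m a b = 0 unless a,b <= n.
\<close>

type_synonym diagram = "(nat \<Rightarrow> nat) \<times> (nat \<Rightarrow> nat \<Rightarrow> nat)"

definition arc_diagrams :: "nat \<Rightarrow> (nat \<Rightarrow> nat) \<Rightarrow> nat \<Rightarrow> diagram set" where
  "arc_diagrams n l linf = {(lab, m).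
      bij_betw lab {1..n} {1..n}
    \<and> (\<forall>pos. pos \<notin> {1..n} \<longrightarrow> lab pos = 0)
    \<and> (\<forall>a b. m a b = m b a)
    \<and> (\<forall>a. m a a = 0)
    \<and> (\<forall>a b. (a > n \<or> b > n) \<longrightarrow> m a b = 0)
    \<and> (\<forall>a b c d. a < c \<and> c < b \<and> b < d \<and> d \<le> n \<longrightarrow> m a b = 0 \<or> m c d = 0)
    \<and> (\<forall>pos\<in>{1..n}. (\<Sum>b\<le>n. m pos b) = l (lab pos))
    \<and> (\<Sum>b\<le>n. m 0 b) = linf}"

text \<open>Arcs crossing the chord are listed
with multiplicity: inner endpoints ascending (A), outer endpoints in the order in
which the boundary is traversed counterclockwise from p (O): p-1,...,1,0,n,...,q+1.
Non-crossing arcs pair these lists index-wise; after reflection the inner ends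
become the reversed, reflected list.\<close>

definition refl_pos :: "nat \<Rightarrow> nat \<Rightarrow> nat \<Rightarrow> nat" where
  "refl_pos p q a = p + q - a"

definition inner_list :: "nat \<Rightarrow> nat \<Rightarrow> nat \<Rightarrow> (nat \<Rightarrow> nat \<Rightarrow> nat) \<Rightarrow> nat list" where
  "inner_list n p q m =
     concat (map (\<lambda>a. replicate (\<Sum>u\<in>{..n} - {p..q}. m u a) a) [p..<Suc q])"

definition outer_order :: "nat \<Rightarrow> nat \<Rightarrow> nat \<Rightarrow> nat list" where
  "outer_order n p q = rev [0..<p] @ rev [Suc q..<Suc n]"

definition outer_list :: "nat \<Rightarrow> nat \<Rightarrow> nat \<Rightarrow> (nat \<Rightarrow> nat \<Rightarrow> nat) \<Rightarrow> nat list" where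
  "outer_list n p q m =
     concat (map (\<lambda>u. replicate (\<Sum>a\<in>{p..q}. m u a) u) (outer_order n p q))"

definition new_crossing :: "nat \<Rightarrow> nat \<Rightarrow> nat \<Rightarrow> (nat \<Rightarrow> nat \<Rightarrow> nat) \<Rightarrow> (nat \<times> nat) list" where
  "new_crossing n p q m =
     zip (outer_list n p q m) (map (refl_pos p q) (rev (inner_list n p q m)))"

definition act :: "nat \<Rightarrow> nat \<Rightarrow> nat \<Rightarrow> diagram \<Rightarrow> diagram" where
  "act n p q x = (case x of (lab, m) \<Rightarrow>
     ((\<lambda>pos. if p \<le> pos \<and> pos \<le> q then lab (refl_pos p q pos) else lab pos),
      (\<lambda>i j. if p \<le> i \<and> i \<le> q \<and> p \<le> j \<and> j \<le> q then m (refl_pos p q i) (refl_pos p q j)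
             else if \<not> (p \<le> i \<and> i \<le> q) \<and> \<not> (p \<le> j \<and> j \<le> q) then m i j
             else if p \<le> i \<and> i \<le> q then count_list (new_crossing n p q m) (j, i)
             else count_list (new_crossing n p q m) (i, j))))"

text \<open>One generator step; the J_n-orbit is the reflexive-transitive closure, since
J_n is generated by the involutions s_{p,q}.\<close>

definition cactus_step :: "nat \<Rightarrow> diagram \<Rightarrow> diagram \<Rightarrow> bool" where
  "cactus_step n x y \<longleftrightarrow> (\<exists>p q. 1 \<le> p \<and> p < q \<and> q \<le> n \<and> y = act n p q x)"

definition same_orbit :: "nat \<Rightarrow> diagram \<Rightarrow> diagram \<Rightarrow> bool" where
  "same_orbit n x y \<longleftrightarrow> (cactus_step n)\<^sup>*\<^sup>* x y"

definition relabel :: "(nat \<Rightarrow> nat) \<Rightarrow> diagram \<Rightarrow> diagram" where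
  "relabel \<sigma> x = (case x of (lab, m) \<Rightarrow> ((\<lambda>pos. inv \<sigma> (lab pos)), m))"

end

(*
  Two positions a < b whose labels have equal valence can exchange their labels within
  the orbit. For b = a + 1 the generator s_{a,a+1} does it: both positions send equally
  many arcs across its chord, and non-crossing arcs through a chord are determined by
  these counts, so the arcs are fixed while the labels are swapped. For b > a + 1 the
  element s_{a+1,b} s_{a,a+1} s_{a+1,b} does it: s_{a+1,b} brings the valence of b next
  to a (keeping the arcs through the chord of a, a+1 non-crossing) and acts on arcs as
  an involution. Transpositions of labels in S generate every permutation of S.
*)
theory Submission
  imports Defs
begin

definition blocks :: "('a \<Rightarrow> nat) \<Rightarrow> 'a list \<Rightarrow> 'a list" where
  "blocks f xs = concat (map (\<lambda>x. replicate (f x) x) xs)"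

lemma blocks_Nil [simp]: "blocks f [] = []"
  by (simp add: blocks_def)

lemma blocks_Cons [simp]: "blocks f (x # xs) = replicate (f x) x @ blocks f xs"
  by (simp add: blocks_def)

lemma blocks_cong: "(\<And>x. x \<in> set xs \<Longrightarrow> f x = g x) \<Longrightarrow> blocks f xs = blocks g xs"
  by (induction xs) auto

lemma length_blocks: "length (blocks f xs) = sum_list (map f xs)"
  by (induction xs) auto

lemma set_blocks: "x \<in> set (blocks f xs) \<longleftrightarrow> x \<in> set xs \<and> 0 < f x"
  by (induction xs) (auto simp: set_replicate_conv_if)

lemma count_list_replicate [simp]: "count_list (replicate k x) y = (if x = y then k else 0)"
  by (induction k) auto

lemma count_list_blocks:
  "distinct xs \<Longrightarrow> count_list (blocks f xs) u = (if u \<in> set xs then f u else 0)"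
  by (induction xs) (auto simp: count_list_0_iff)

lemma sorted_map_blocks: "sorted (map g xs) \<Longrightarrow> sorted (map g (blocks f xs))"
  by (induction xs) (auto simp: sorted_append set_blocks)

lemma blocks_append [simp]: "blocks f (xs @ ys) = blocks f xs @ blocks f ys"
  by (simp add: blocks_def)

lemma rev_blocks: "rev (blocks f xs) = blocks f (rev xs)"
  by (induction xs) auto

lemma blocks_map: "blocks f (map g xs) = map g (blocks (f \<circ> g) xs)"
  by (induction xs) auto

lemma blocks_split:
  assumes "\<forall>b\<in>set ys. r b \<le> c b"
    and "\<forall>k l. k < l \<and> l < length ys \<and> r (ys ! k) < c (ys ! k) \<longrightarrow> r (ys ! l) = 0"
  shows "blocks c ys = blocks r ys @ blocks (\<lambda>b. c b - r b) ys"
  using assms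
proof (induction ys)
  case Nil
  then show ?case by simp
next
  case (Cons b ys)
  show ?case
  proof (cases "r b < c b")
    case True
    have "r b' = 0" if b': "b' \<in> set ys" for b'
    proof -
      obtain l where "l < length ys" "ys ! l = b'"
        using b' by (auto simp: in_set_conv_nth)
      then show ?thesis
        using Cons.prems(2)[rule_format, of 0 "Suc l"] True by simp
    qed
    then have "blocks r ys = []" "blocks (\<lambda>b. c b - r b) ys = blocks c ys"
      by (auto simp: blocks_def cong: map_cong)
    then show ?thesis
      using True by (simp add: replicate_add[symmetric])
  next
    case False
    have "\<forall>k l. k < l \<and> l < length ys \<and> r (ys ! k) < c (ys ! k) \<longrightarrow> r (ys ! l) = 0"
      using Cons.prems(2) by (metis Suc_less_eq length_Cons nth_Cons_Suc)
    then have "blocks c ys = blocks r ys @ blocks (\<lambda>b. c b - r b) ys"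
      using Cons.IH Cons.prems(1) by simp
    then show ?thesis
      using False Cons.prems(1) by (simp add: le_antisym)
  qed
qed

lemma count_zip_replicate:
  "count_list (zip (replicate k u) ys) (v, b) = (if v = u then count_list (take k ys) b else 0)"
proof (induction k arbitrary: ys)
  case (Suc k)
  then show ?case by (cases ys) auto
qed simp

text \<open>A matrix \<open>M\<close> with no crossing pair of nonzero entries is recovered from
  its row and column sums by pairing the expanded row list with the expanded
  column list.\<close>

lemma count_zip_blocks:
  assumes "distinct xs" "distinct ys"
    and "\<forall>i j k l. i < j \<and> j < length xs \<and> k < l \<and> l < length ys \<longrightarrow>
           M (xs ! i) (ys ! l) = 0 \<or> M (xs ! j) (ys ! k) = 0"
    and "u \<in> set xs" "b \<in> set ys"
  shows "count_list (zip (blocks (\<lambda>u. sum_list (map (M u) ys)) xs)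
                         (blocks (\<lambda>b. sum_list (map (\<lambda>u. M u b) xs)) ys)) (u, b) = M u b"
  using assms
proof (induction xs arbitrary: u)
  case Nil
  then show ?case by simp
next
  case (Cons x xs)
  define R where "R = (\<lambda>u. sum_list (map (M u) ys))"
  define C where "C = (\<lambda>b. sum_list (map (\<lambda>u. M u b) xs))"
  have nc: "\<forall>i j k l. i < j \<and> j < length xs \<and> k < l \<and> l < length ys \<longrightarrow>
           M (xs ! i) (ys ! l) = 0 \<or> M (xs ! j) (ys ! k) = 0"
    using Cons.prems(3) by (metis Suc_less_eq length_Cons nth_Cons_Suc)
  have split: "blocks (\<lambda>b. M x b + C b) ys = blocks (M x) ys @ blocks C ys"
  proof -
    have "M x (ys ! l) = 0" if "k < l" "l < length ys" "0 < C (ys ! k)" for k l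
    proof -
      have "sum_list (map (\<lambda>u. M u (ys ! k)) xs) \<noteq> 0"
        using \<open>0 < C (ys ! k)\<close> by (metis C_def gr_implies_not0)
      then obtain u where "u \<in> set xs" "M u (ys ! k) \<noteq> 0"
        by (metis (no_types, lifting) imageE list.set_map sum_list_eq_0_iff)
      then obtain j where "j < length xs" "0 < M (xs ! j) (ys ! k)"
        by (auto simp: in_set_conv_nth)
      then show ?thesis
        using Cons.prems(3)[rule_format, of 0 "Suc j" k l] that by auto
    qed
    then show ?thesis
      using blocks_split[of ys "M x" "\<lambda>b. M x b + C b"] by auto
  qed
  have zip_eq: "zip (blocks R (x # xs)) (blocks (\<lambda>b. M x b + C b) ys) =
      zip (replicate (R x) x) (blocks (M x) ys) @ zip (blocks R xs) (blocks C ys)"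
    unfolding split by (simp add: R_def length_blocks)
  have "count_list (zip (blocks R (x # xs)) (blocks (\<lambda>b. M x b + C b) ys)) (u, b) = M u b"
  proof (cases "u = x")
    case True
    have "(x, b) \<notin> set (zip (blocks R xs) (blocks C ys))"
      using Cons.prems(1) by (auto dest: set_zip_leftD simp: set_blocks)
    then show ?thesis
      unfolding zip_eq using True Cons.prems
      by (simp add: count_zip_replicate count_list_blocks R_def length_blocks)
  next
    case False
    then show ?thesis
      unfolding zip_eq using Cons.IH[OF _ Cons.prems(2) nc] Cons.prems
      by (simp add: count_zip_replicate R_def C_def)
  qed
  then show ?case
    by (simp add: R_def C_def)
qed

lemma refl_pos_bounds:
  assumes "p \<le> a" "a \<le> q"
  shows "p \<le> refl_pos p q a" "refl_pos p q a \<le> q"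
  using assms unfolding refl_pos_def by linarith+

lemma refl_pos_refl_pos [simp]: "p \<le> a \<Longrightarrow> a \<le> q \<Longrightarrow> refl_pos p q (refl_pos p q a) = a"
  by (simp add: refl_pos_def)

lemma rev_upt_refl_pos: "p \<le> q \<Longrightarrow> rev [p..<Suc q] = map (refl_pos p q) [p..<Suc q]"
  by (rule nth_equalityI) (auto simp: rev_nth refl_pos_def simp del: upt_Suc)

lemma mem_outer_order:
  "p \<le> q \<Longrightarrow> q \<le> n \<Longrightarrow> u \<in> set (outer_order n p q) \<longleftrightarrow> u \<le> n \<and> (u < p \<or> q < u)"
  by (auto simp: outer_order_def)

lemma set_outer_order: "p \<le> q \<Longrightarrow> q \<le> n \<Longrightarrow> set (outer_order n p q) = {..n} - {p..q}"
  by (auto simp: mem_outer_order)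

lemma length_outer_order: "q \<le> n \<Longrightarrow> length (outer_order n p q) = p + (n - q)"
  by (simp add: outer_order_def del: upt_Suc)

lemma distinct_outer_order: "p \<le> q \<Longrightarrow> distinct (outer_order n p q)"
  by (auto simp: outer_order_def)

text \<open>The position of an outer vertex in the counterclockwise traversal from \<open>p\<close>.\<close>

definition outer_rank :: "nat \<Rightarrow> nat \<Rightarrow> nat \<Rightarrow> nat" where
  "outer_rank n p u = (if u < p then p - 1 - u else p + n - u)"

lemma map_outer_rank_outer_order:
  "p \<le> q \<Longrightarrow> q \<le> n \<Longrightarrow> map (outer_rank n p) (outer_order n p q) = [0..<p + (n - q)]"
  by (rule nth_equalityI)
    (auto simp: outer_order_def outer_rank_def nth_append rev_nth simp del: upt_Suc)

lemma outer_rank_nth_outer_order: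
  assumes "p \<le> q" "q \<le> n" "k < length (outer_order n p q)"
  shows "outer_rank n p (outer_order n p q ! k) = k"
proof -
  have "outer_rank n p (outer_order n p q ! k) = map (outer_rank n p) (outer_order n p q) ! k"
    using assms(3) by simp
  also have "\<dots> = k"
    using assms by (simp add: map_outer_rank_outer_order length_outer_order del: upt_Suc)
  finally show ?thesis .
qed

definition out_crossings :: "nat \<Rightarrow> nat \<Rightarrow> (nat \<Rightarrow> nat \<Rightarrow> nat) \<Rightarrow> nat \<Rightarrow> nat" where
  "out_crossings p q m u = (\<Sum>a\<in>{p..q}. m u a)"

definition in_crossings :: "nat \<Rightarrow> nat \<Rightarrow> nat \<Rightarrow> (nat \<Rightarrow> nat \<Rightarrow> nat) \<Rightarrow> nat \<Rightarrow> nat" where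
  "in_crossings n p q m a = (\<Sum>u\<in>{..n} - {p..q}. m u a)"

lemma outer_list_eq: "outer_list n p q m = blocks (out_crossings p q m) (outer_order n p q)"
  by (simp add: outer_list_def blocks_def out_crossings_def)

lemma inner_list_eq: "inner_list n p q m = blocks (in_crossings n p q m) [p..<Suc q]"
  by (simp add: inner_list_def blocks_def in_crossings_def)

lemma new_crossing_eq:
  assumes "p \<le> q"
  shows "new_crossing n p q m = zip (blocks (out_crossings p q m) (outer_order n p q))
           (blocks (in_crossings n p q m \<circ> refl_pos p q) [p..<Suc q])"
proof -
  have "map (refl_pos p q) (rev (blocks f [p..<Suc q])) = blocks (f \<circ> refl_pos p q) [p..<Suc q]"
    for f :: "nat \<Rightarrow> nat"
  proof -
    have "map (refl_pos p q) (map (refl_pos p q) xs) = xs" if "set xs \<subseteq> {p..q}" for xs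
      using that by (induction xs) auto
    moreover have "set (blocks (f \<circ> refl_pos p q) [p..<Suc q]) \<subseteq> {p..q}"
      by (auto simp: set_blocks)
    ultimately show ?thesis
      unfolding rev_blocks rev_upt_refl_pos[OF assms] blocks_map by simp
  qed
  then show ?thesis
    by (simp add: new_crossing_def outer_list_eq inner_list_eq)
qed

lemma length_outer_inner_blocks:
  assumes "p \<le> q" "q \<le> n"
  shows "length (blocks (out_crossings p q m) (outer_order n p q)) =
         length (blocks (in_crossings n p q m \<circ> refl_pos p q) [p..<Suc q])"
proof -
  have "length (blocks (out_crossings p q m) (outer_order n p q)) = sum (out_crossings p q m) ({..n} - {p..q})"
    using assms by (simp add: length_blocks sum_list_distinct_conv_sum_set distinct_outer_order set_outer_order)
  also have "\<dots> = sum (in_crossings n p q m) {p..q}"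
    unfolding out_crossings_def in_crossings_def by (rule sum.swap)
  also have "\<dots> = sum (in_crossings n p q m \<circ> refl_pos p q) {p..q}"
    by (rule sum.reindex_bij_witness[where i="refl_pos p q" and j="refl_pos p q"]) (auto simp: refl_pos_bounds)
  also have "\<dots> = length (blocks (in_crossings n p q m \<circ> refl_pos p q) [p..<Suc q])"
    by (simp add: length_blocks sum_list_distinct_conv_sum_set atLeastLessThanSuc_atLeastAtMost del: upt_Suc)
  finally show ?thesis .
qed

definition arc_matrix :: "nat \<Rightarrow> (nat \<Rightarrow> nat \<Rightarrow> nat) \<Rightarrow> bool" where
  "arc_matrix n m \<longleftrightarrow> (\<forall>a b. m a b = m b a) \<and> (\<forall>a. m a a = 0) \<and> (\<forall>a b. (a > n \<or> b > n) \<longrightarrow> m a b = 0)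
    \<and> (\<forall>a b c d. a < c \<and> c < b \<and> b < d \<and> d \<le> n \<longrightarrow> m a b = 0 \<or> m c d = 0)"

lemma arc_diagrams_iff:
  "(lab, m) \<in> arc_diagrams n l linf \<longleftrightarrow>
    bij_betw lab {1..n} {1..n} \<and> (\<forall>pos. pos \<notin> {1..n} \<longrightarrow> lab pos = 0) \<and> arc_matrix n m \<and>
    (\<forall>pos\<in>{1..n}. (\<Sum>b\<le>n. m pos b) = l (lab pos)) \<and> (\<Sum>b\<le>n. m 0 b) = linf"
  by (simp add: arc_diagrams_def arc_matrix_def conj_assoc)

lemma arc_matrix_sym: "arc_matrix n m \<Longrightarrow> m i j = m j i"
  by (simp add: arc_matrix_def)

lemma arc_matrix_diag: "arc_matrix n m \<Longrightarrow> m i i = 0"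
  by (simp add: arc_matrix_def)

lemma arc_matrix_beyond: "arc_matrix n m \<Longrightarrow> n < u \<Longrightarrow> m u a = 0"
  by (simp add: arc_matrix_def)

lemma arc_matrix_beyond': "arc_matrix n m \<Longrightarrow> n < u \<Longrightarrow> m a u = 0"
  by (simp add: arc_matrix_def)

lemma arc_matrix_noncrossing:
  assumes "arc_matrix n m" "a < c" "c < b" "b < d" "d \<le> n"
  shows "m a b = 0 \<or> m c d = 0"
proof -
  have "\<forall>a b c d. a < c \<and> c < b \<and> b < d \<and> d \<le> n \<longrightarrow> m a b = 0 \<or> m c d = 0"
    using assms(1) by (simp add: arc_matrix_def)
  then show ?thesis
    using assms(2-) by simp
qed

definition chords_cross :: "nat \<Rightarrow> nat \<Rightarrow> nat \<Rightarrow> nat \<Rightarrow> bool" where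
  "chords_cross a b c d \<longleftrightarrow> c \<notin> {a, b} \<and> d \<notin> {a, b} \<and>
     ((min a b < c \<and> c < max a b) \<longleftrightarrow> \<not> (min a b < d \<and> d < max a b))"

lemma arc_matrix_chords_cross:
  assumes m: "arc_matrix n m" and cross: "chords_cross a b c d"
  shows "m a b = 0 \<or> m c d = 0"
proof -
  have base: "m x z = 0 \<or> m y w = 0" if "x < y" "y < z" "z < w" for x y z w
    using arc_matrix_noncrossing[OF m that] arc_matrix_beyond'[OF m, of w y] by (cases "w \<le> n") auto
  have ordered: "m a b = 0 \<or> m c d = 0" if ab: "a < b" and cr: "chords_cross a b c d" for a b
  proof -
    have "d < a \<and> a < c \<and> c < b \<or> a < c \<and> c < b \<and> b < d \<or> c < a \<and> a < d \<and> d < b \<or> a < d \<and> d < b \<and> b < c"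
      using ab cr unfolding chords_cross_def by (simp add: min_def max_def) arith
    then consider "d < a" "a < c" "c < b" | "a < c" "c < b" "b < d" | "c < a" "a < d" "d < b"
      | "a < d" "d < b" "b < c"
      by blast
    then show ?thesis
      using base[of d a c b] base[of a c b d] base[of c a d b] base[of a d b c] arc_matrix_sym[OF m, of c d]
      by cases auto
  qed
  consider "a < b" | "b < a" | "a = b"
    by linarith
  then show ?thesis
  proof cases
    case 2
    then show ?thesis
      using ordered[of b a] cross arc_matrix_sym[OF m, of a b] by (auto simp: chords_cross_def min.commute max.commute)
  qed (use ordered cross in \<open>auto simp: chords_cross_def\<close>)
qed

definition chord_noncrossing :: "nat \<Rightarrow> nat \<Rightarrow> nat \<Rightarrow> (nat \<Rightarrow> nat \<Rightarrow> nat) \<Rightarrow> bool" where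
  "chord_noncrossing n p q m \<longleftrightarrow>
    (\<forall>u u' a a'. u \<in> set (outer_order n p q) \<and> u' \<in> set (outer_order n p q) \<and>
       outer_rank n p u < outer_rank n p u' \<and> p \<le> a \<and> a < a' \<and> a' \<le> q \<longrightarrow> m u a' = 0 \<or> m u' a = 0)"

lemma arc_matrix_chord_noncrossing:
  assumes m: "arc_matrix n m" and pq: "p \<le> q" "q \<le> n"
  shows "chord_noncrossing n p q m"
  unfolding chord_noncrossing_def
proof (intro allI impI)
  fix u u' a a'
  assume h: "u \<in> set (outer_order n p q) \<and> u' \<in> set (outer_order n p q) \<and>
    outer_rank n p u < outer_rank n p u' \<and> p \<le> a \<and> a < a' \<and> a' \<le> q"
  then have "chords_cross u a' u' a"
    using pq by (auto simp: chords_cross_def mem_outer_order outer_rank_def split: if_splits)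
  then show "m u a' = 0 \<or> m u' a = 0"
    by (rule arc_matrix_chords_cross[OF m])
qed

lemma count_zip_outer_inner_list:
  assumes nc: "chord_noncrossing n p q m" and pq: "p \<le> q" "q \<le> n"
    and u: "u \<in> set (outer_order n p q)" and a: "p \<le> a" "a \<le> q"
  shows "count_list (zip (outer_list n p q m) (inner_list n p q m)) (u, a) = m u a"
proof -
  let ?O = "outer_order n p q" and ?I = "[p..<Suc q]"
  have "out_crossings p q m = (\<lambda>v. sum_list (map (m v) ?I))"
    by (simp add: fun_eq_iff out_crossings_def sum_list_distinct_conv_sum_set
        atLeastLessThanSuc_atLeastAtMost del: upt_Suc)
  moreover have "in_crossings n p q m = (\<lambda>b. sum_list (map (\<lambda>v. m v b) ?O))"
    using pq by (simp add: fun_eq_iff in_crossings_def sum_list_distinct_conv_sum_set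
        distinct_outer_order set_outer_order)
  moreover have "\<forall>i j k l. i < j \<and> j < length ?O \<and> k < l \<and> l < length ?I \<longrightarrow>
      m (?O ! i) (?I ! l) = 0 \<or> m (?O ! j) (?I ! k) = 0"
  proof (intro allI impI)
    fix i j k l assume h: "i < j \<and> j < length ?O \<and> k < l \<and> l < length ?I"
    then have "?O ! i \<in> set ?O" "?O ! j \<in> set ?O" "outer_rank n p (?O ! i) < outer_rank n p (?O ! j)"
      using pq by (auto simp: outer_rank_nth_outer_order)
    moreover have "?I ! k = p + k" "?I ! l = p + l" "p + l \<le> q"
      using h by (auto simp del: upt_Suc)
    ultimately show "m (?O ! i) (?I ! l) = 0 \<or> m (?O ! j) (?I ! k) = 0"
      using nc h unfolding chord_noncrossing_def by auto
  qed
  ultimately show ?thesis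
    using count_zip_blocks[OF distinct_outer_order[OF pq(1)] distinct_upt _ u, where M = m and b = a] a
    by (simp add: outer_list_eq inner_list_eq del: upt_Suc)
qed

definition chord_reflection :: "nat \<Rightarrow> nat \<Rightarrow> nat \<Rightarrow> nat" where
  "chord_reflection p q pos = (if p \<le> pos \<and> pos \<le> q then refl_pos p q pos else pos)"

definition act_arcs :: "nat \<Rightarrow> nat \<Rightarrow> nat \<Rightarrow> (nat \<Rightarrow> nat \<Rightarrow> nat) \<Rightarrow> nat \<Rightarrow> nat \<Rightarrow> nat" where
  "act_arcs n p q m = snd (act n p q (undefined, m))"

lemma act_eq: "act n p q (lab, m) = (lab \<circ> chord_reflection p q, act_arcs n p q m)"
  by (simp add: act_def act_arcs_def chord_reflection_def fun_eq_iff)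

lemma act_arcs_out_out:
  "\<not> (p \<le> u \<and> u \<le> q) \<Longrightarrow> \<not> (p \<le> w \<and> w \<le> q) \<Longrightarrow> act_arcs n p q m u w = m u w"
  by (auto simp: act_arcs_def act_def)

lemma act_arcs_in_in:
  "p \<le> u \<Longrightarrow> u \<le> q \<Longrightarrow> p \<le> w \<Longrightarrow> w \<le> q \<Longrightarrow>
    act_arcs n p q m u w = m (refl_pos p q u) (refl_pos p q w)"
  by (simp add: act_arcs_def act_def)

lemma act_arcs_out_in:
  "\<not> (p \<le> u \<and> u \<le> q) \<Longrightarrow> p \<le> a \<Longrightarrow> a \<le> q \<Longrightarrow>
    act_arcs n p q m u a = count_list (new_crossing n p q m) (u, a)"
  by (auto simp: act_arcs_def act_def)

lemma act_arcs_in_out: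
  "\<not> (p \<le> u \<and> u \<le> q) \<Longrightarrow> p \<le> a \<Longrightarrow> a \<le> q \<Longrightarrow>
    act_arcs n p q m a u = count_list (new_crossing n p q m) (u, a)"
  by (auto simp: act_arcs_def act_def)

lemma mem_new_crossing:
  assumes "p \<le> q" "q \<le> n" "(u, w) \<in> set (new_crossing n p q m)"
  shows "u \<le> n \<and> (u < p \<or> q < u) \<and> 0 < out_crossings p q m u \<and>
         p \<le> w \<and> w \<le> q \<and> 0 < in_crossings n p q m (refl_pos p q w)"
proof -
  have "u \<in> set (blocks (out_crossings p q m) (outer_order n p q))"
    "w \<in> set (blocks (in_crossings n p q m \<circ> refl_pos p q) [p..<Suc q])"
    using assms(3) unfolding new_crossing_eq[OF assms(1)]
    by (auto dest: set_zip_leftD set_zip_rightD simp del: upt_Suc)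
  then show ?thesis
    using assms(1,2) by (auto simp: set_blocks mem_outer_order simp del: upt_Suc)
qed

lemma act_arcs_eqI:
  assumes pq: "p \<le> q" "q \<le> n"
    and nc: "chord_noncrossing n p q m" and sym: "\<And>i j. m i j = m j i"
    and beyond: "\<And>u a. n < u \<Longrightarrow> m u a = 0"
    and crossing: "new_crossing n p q m' = zip (outer_list n p q m) (inner_list n p q m)"
    and out_out: "\<And>i j. \<not> (p \<le> i \<and> i \<le> q) \<Longrightarrow> \<not> (p \<le> j \<and> j \<le> q) \<Longrightarrow> m' i j = m i j"
    and in_in: "\<And>i j. p \<le> i \<Longrightarrow> i \<le> q \<Longrightarrow> p \<le> j \<Longrightarrow> j \<le> q \<Longrightarrow>
      m' (refl_pos p q i) (refl_pos p q j) = m i j"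
  shows "act_arcs n p q m' = m"
proof -
  have cnt: "count_list (new_crossing n p q m') (u, a) = m u a"
    if u: "\<not> (p \<le> u \<and> u \<le> q)" and a: "p \<le> a" "a \<le> q" for u a
  proof (cases "u \<le> n")
    case True
    then have "u \<in> set (outer_order n p q)"
      using u pq by (auto simp: mem_outer_order)
    then show ?thesis
      unfolding crossing using count_zip_outer_inner_list[OF nc pq _ a] by simp
  next
    case False
    then have "(u, a) \<notin> set (new_crossing n p q m')"
      using mem_new_crossing[OF pq] unfolding crossing new_crossing_def by fastforce
    then show ?thesis
      using beyond[of u a] False by simp
  qed
  have "act_arcs n p q m' i j = m i j" for i j
  proof (cases "p \<le> i \<and> i \<le> q"; cases "p \<le> j \<and> j \<le> q")
    assume "p \<le> i \<and> i \<le> q" "p \<le> j \<and> j \<le> q"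
    then show ?thesis
      using in_in[of i j] by (simp add: act_arcs_in_in)
  next
    assume "p \<le> i \<and> i \<le> q" "\<not> (p \<le> j \<and> j \<le> q)"
    then show ?thesis
      using cnt[of j i] sym[of i j] by (simp add: act_arcs_in_out)
  next
    assume "\<not> (p \<le> i \<and> i \<le> q)" "p \<le> j \<and> j \<le> q"
    then show ?thesis
      using cnt[of i j] by (simp add: act_arcs_out_in)
  next
    assume "\<not> (p \<le> i \<and> i \<le> q)" "\<not> (p \<le> j \<and> j \<le> q)"
    then show ?thesis
      using out_out[of i j] by (simp add: act_arcs_out_out)
  qed
  then show ?thesis
    by (simp add: fun_eq_iff)
qed

lemma sum_count_zip_left:
  "length xs = length ys \<Longrightarrow> set ys \<subseteq> B \<Longrightarrow> finite B \<Longrightarrow>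
    (\<Sum>b\<in>B. count_list (zip xs ys) (u, b)) = count_list xs u"
proof (induction xs ys rule: list_induct2)
  case (Cons x xs y ys)
  have "(\<Sum>b\<in>B. count_list (zip (x # xs) (y # ys)) (u, b)) =
        (\<Sum>b\<in>B. (if x = u \<and> y = b then 1 else 0) + count_list (zip xs ys) (u, b))"
    by (intro sum.cong) auto
  also have "\<dots> = (if x = u then 1 else 0) + count_list xs u"
    using Cons by (simp add: sum.distrib sum.delta' cong: if_cong)
  finally show ?case by simp
qed simp

lemma sum_count_zip_right:
  "length xs = length ys \<Longrightarrow> set xs \<subseteq> A \<Longrightarrow> finite A \<Longrightarrow>
    (\<Sum>a\<in>A. count_list (zip xs ys) (a, v)) = count_list ys v"
proof (induction xs ys rule: list_induct2)
  case (Cons x xs y ys)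
  have "(\<Sum>a\<in>A. count_list (zip (x # xs) (y # ys)) (a, v)) =
        (\<Sum>a\<in>A. (if x = a \<and> y = v then 1 else 0) + count_list (zip xs ys) (a, v))"
    by (intro sum.cong) auto
  also have "\<dots> = (if y = v then 1 else 0) + count_list ys v"
    using Cons by (simp add: sum.distrib sum.delta cong: if_cong)
  finally show ?case by simp
qed simp

lemma sum_count_new_crossing_outer:
  assumes pq: "p \<le> q" "q \<le> n" and u: "u \<in> set (outer_order n p q)"
  shows "(\<Sum>a\<in>{p..q}. count_list (new_crossing n p q m) (u, a)) = out_crossings p q m u"
proof -
  have "(\<Sum>a\<in>{p..q}. count_list (new_crossing n p q m) (u, a)) =
        count_list (blocks (out_crossings p q m) (outer_order n p q)) u"
    unfolding new_crossing_eq[OF pq(1)]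
    by (rule sum_count_zip_left[OF length_outer_inner_blocks[OF pq]])
      (auto simp: set_blocks simp del: upt_Suc)
  also have "\<dots> = out_crossings p q m u"
    using u pq by (simp add: count_list_blocks distinct_outer_order)
  finally show ?thesis .
qed

lemma sum_count_new_crossing_inner:
  assumes pq: "p \<le> q" "q \<le> n" and a: "p \<le> a" "a \<le> q"
  shows "(\<Sum>u\<in>{..n} - {p..q}. count_list (new_crossing n p q m) (u, a)) =
    in_crossings n p q m (refl_pos p q a)"
proof -
  have "(\<Sum>u\<in>{..n} - {p..q}. count_list (new_crossing n p q m) (u, a)) =
        count_list (blocks (in_crossings n p q m \<circ> refl_pos p q) [p..<Suc q]) a"
    unfolding new_crossing_eq[OF pq(1)]
    by (rule sum_count_zip_right[OF length_outer_inner_blocks[OF pq]])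
      (auto simp: set_blocks mem_outer_order pq)
  also have "\<dots> = in_crossings n p q m (refl_pos p q a)"
    using a by (simp add: count_list_blocks del: upt_Suc)
  finally show ?thesis .
qed

text \<open>Reflecting twice restores the crossing arcs because the new crossing list pairs
  the outer endpoints with the reflected inner endpoints in the same order.\<close>

lemma act_arcs_involution:
  assumes pq: "p \<le> q" "q \<le> n" and m: "arc_matrix n m"
  shows "act_arcs n p q (act_arcs n p q m) = m"
proof (rule act_arcs_eqI[OF pq arc_matrix_chord_noncrossing[OF m pq]])
  let ?y = "act_arcs n p q m"
  show "m i j = m j i" for i j
    using m by (rule arc_matrix_sym)
  show "n < u \<Longrightarrow> m u a = 0" for u a
    using m by (rule arc_matrix_beyond)
  show "\<not> (p \<le> i \<and> i \<le> q) \<Longrightarrow> \<not> (p \<le> j \<and> j \<le> q) \<Longrightarrow> ?y i j = m i j" for i j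
    by (simp add: act_arcs_out_out)
  show "p \<le> i \<Longrightarrow> i \<le> q \<Longrightarrow> p \<le> j \<Longrightarrow> j \<le> q \<Longrightarrow> ?y (refl_pos p q i) (refl_pos p q j) = m i j"
    for i j by (simp add: act_arcs_in_in refl_pos_bounds)
  have "out_crossings p q ?y u = out_crossings p q m u" if u: "u \<in> set (outer_order n p q)" for u
  proof -
    have "\<not> (p \<le> u \<and> u \<le> q)"
      using u pq by (auto simp: mem_outer_order)
    then have "out_crossings p q ?y u = (\<Sum>a\<in>{p..q}. count_list (new_crossing n p q m) (u, a))"
      unfolding out_crossings_def by (intro sum.cong) (auto simp: act_arcs_out_in)
    then show ?thesis
      using sum_count_new_crossing_outer[OF pq u] by simp
  qed
  moreover have "in_crossings n p q ?y (refl_pos p q a) = in_crossings n p q m a"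
    if a: "p \<le> a" "a \<le> q" for a
  proof -
    have "in_crossings n p q ?y (refl_pos p q a) =
        (\<Sum>u\<in>{..n} - {p..q}. count_list (new_crossing n p q m) (u, refl_pos p q a))"
      unfolding in_crossings_def using refl_pos_bounds[OF a] by (intro sum.cong) (auto simp: act_arcs_out_in)
    then show ?thesis
      using sum_count_new_crossing_inner[OF pq refl_pos_bounds[OF a]] a by simp
  qed
  ultimately show "new_crossing n p q ?y = zip (outer_list n p q m) (inner_list n p q m)"
    unfolding new_crossing_eq[OF pq(1)] outer_list_eq inner_list_eq
    by (auto intro!: arg_cong2[where f = zip] blocks_cong simp del: upt_Suc)
qed

lemma act_arcs_sym:
  assumes "arc_matrix n m"
  shows "act_arcs n p q m i j = act_arcs n p q m j i"
  using arc_matrix_sym[OF assms]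
  by (cases "p \<le> i \<and> i \<le> q"; cases "p \<le> j \<and> j \<le> q")
    (simp_all add: act_arcs_in_in act_arcs_out_out act_arcs_in_out act_arcs_out_in)

lemma act_arcs_diag: "arc_matrix n m \<Longrightarrow> act_arcs n p q m v v = 0"
  by (cases "p \<le> v \<and> v \<le> q") (simp_all add: act_arcs_in_in act_arcs_out_out arc_matrix_diag)

lemma act_arcs_beyond:
  assumes m: "arc_matrix n m" and pq: "p \<le> q" "q \<le> n" and u: "n < u"
  shows "act_arcs n p q m u w = 0"
proof (cases "p \<le> w \<and> w \<le> q")
  case True
  have "(u, w) \<notin> set (new_crossing n p q m)"
    using mem_new_crossing[OF pq] u by fastforce
  then show ?thesis
    using True u pq by (simp add: act_arcs_out_in)
next
  case False
  then show ?thesis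
    using u pq m by (simp add: act_arcs_out_out arc_matrix_beyond)
qed

lemma sum_atMost_split:
  "q \<le> n \<Longrightarrow> sum (f :: nat \<Rightarrow> nat) {..n} = sum f {p..q} + sum f ({..n} - {p..q})"
  by (subst sum.subset_diff[of "{p..q}" "{..n}"]) auto

lemma degree_act_arcs_outside:
  assumes pq: "p \<le> q" "q \<le> n" and v: "v \<le> n" "\<not> (p \<le> v \<and> v \<le> q)"
  shows "(\<Sum>w\<le>n. act_arcs n p q m v w) = (\<Sum>w\<le>n. m v w)"
proof -
  have "v \<in> set (outer_order n p q)"
    using v pq by (auto simp: mem_outer_order)
  then have "(\<Sum>w\<in>{p..q}. act_arcs n p q m v w) = (\<Sum>w\<in>{p..q}. m v w)"
    using sum_count_new_crossing_outer[OF pq, of v m] v(2)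
    by (simp add: act_arcs_out_in out_crossings_def)
  moreover have "(\<Sum>w\<in>{..n} - {p..q}. act_arcs n p q m v w) = (\<Sum>w\<in>{..n} - {p..q}. m v w)"
    using v by (intro sum.cong) (auto simp: act_arcs_out_out)
  ultimately show ?thesis
    using sum_atMost_split[OF pq(2), of "act_arcs n p q m v" p] sum_atMost_split[OF pq(2), of "m v" p]
    by simp
qed

lemma degree_act_arcs_inside:
  assumes m: "arc_matrix n m" and pq: "p \<le> q" "q \<le> n" and v: "p \<le> v" "v \<le> q"
  shows "(\<Sum>w\<le>n. act_arcs n p q m v w) = (\<Sum>w\<le>n. m (refl_pos p q v) w)"
proof -
  have "(\<Sum>w\<in>{p..q}. act_arcs n p q m v w) = (\<Sum>w\<in>{p..q}. m (refl_pos p q v) (refl_pos p q w))"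
    using v by (intro sum.cong) (auto simp: act_arcs_in_in)
  also have "\<dots> = (\<Sum>w\<in>{p..q}. m (refl_pos p q v) w)"
    by (rule sum.reindex_bij_witness[where i = "refl_pos p q" and j = "refl_pos p q"])
      (auto simp: refl_pos_bounds)
  finally have inside: "(\<Sum>w\<in>{p..q}. act_arcs n p q m v w) = (\<Sum>w\<in>{p..q}. m (refl_pos p q v) w)" .
  have "(\<Sum>w\<in>{..n} - {p..q}. act_arcs n p q m v w) =
      (\<Sum>w\<in>{..n} - {p..q}. count_list (new_crossing n p q m) (w, v))"
    using v by (intro sum.cong) (auto simp: act_arcs_in_out)
  also have "\<dots> = (\<Sum>w\<in>{..n} - {p..q}. m (refl_pos p q v) w)"
    using sum_count_new_crossing_inner[OF pq v] arc_matrix_sym[OF m]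
    by (simp add: in_crossings_def)
  finally show ?thesis
    using inside sum_atMost_split[OF pq(2), of "act_arcs n p q m v" p]
      sum_atMost_split[OF pq(2), of "m (refl_pos p q v)" p]
    by simp
qed

lemma zip_sorted_mono:
  assumes "sorted (map g xs)" "sorted ys" "(x1, y1) \<in> set (zip xs ys)" "(x2, y2) \<in> set (zip xs ys)"
    and "(g x1 :: nat) < g x2"
  shows "(y1 :: nat) \<le> y2"
proof -
  obtain i j where ij: "i < length xs" "i < length ys" "xs ! i = x1" "ys ! i = y1"
    "j < length xs" "j < length ys" "xs ! j = x2" "ys ! j = y2"
    using assms(3,4) by (auto simp: set_zip)
  have "\<not> j \<le> i"
    using sorted_nth_mono[OF assms(1), of j i] ij assms(5) by auto
  then show ?thesis
    using sorted_nth_mono[OF assms(2), of i j] ij by simp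
qed

lemma new_crossing_mono:
  assumes pq: "p \<le> q" "q \<le> n"
    and "(u, w) \<in> set (new_crossing n p q m)" "(u', w') \<in> set (new_crossing n p q m)"
    and "outer_rank n p u < outer_rank n p u'"
  shows "w \<le> w'"
proof (rule zip_sorted_mono[where g = "outer_rank n p"])
  show "sorted (map (outer_rank n p) (blocks (out_crossings p q m) (outer_order n p q)))"
    using pq by (intro sorted_map_blocks) (simp add: map_outer_rank_outer_order del: upt_Suc)
  show "sorted (blocks (in_crossings n p q m \<circ> refl_pos p q) [p..<Suc q])"
    using sorted_map_blocks[where g = id and xs = "[p..<Suc q]"] by (simp del: upt_Suc)
qed (use assms in \<open>simp_all add: new_crossing_eq\<close>)

lemma sum_pos_ex: "0 < (\<Sum>x\<in>A. f x :: nat) \<Longrightarrow> \<exists>x\<in>A. 0 < f x"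
  by (metis neq0_conv sum.neutral)

lemma act_arcs_crossing_pos:
  assumes pq: "p \<le> q" "q \<le> n" and u: "\<not> (p \<le> u \<and> u \<le> q)" and a: "p \<le> a" "a \<le> q"
    and pos: "0 < act_arcs n p q m u a"
  shows "(u, a) \<in> set (new_crossing n p q m)"
    and "\<exists>w. p \<le> w \<and> w \<le> q \<and> 0 < m u w"
    and "\<exists>w. w \<le> n \<and> \<not> (p \<le> w \<and> w \<le> q) \<and> 0 < m w (refl_pos p q a)"
proof -
  show nc: "(u, a) \<in> set (new_crossing n p q m)"
    using pos u a by (metis act_arcs_out_in count_notin less_irrefl)
  show "\<exists>w. p \<le> w \<and> w \<le> q \<and> 0 < m u w"
    using mem_new_crossing[OF pq nc] sum_pos_ex[of "m u" "{p..q}"] by (auto simp: out_crossings_def)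
  show "\<exists>w. w \<le> n \<and> \<not> (p \<le> w \<and> w \<le> q) \<and> 0 < m w (refl_pos p q a)"
    using mem_new_crossing[OF pq nc] sum_pos_ex[of "\<lambda>w. m w (refl_pos p q a)" "{..n} - {p..q}"]
    by (auto simp: in_crossings_def)
qed

lemma chord_noncrossing_act_arcs:
  assumes m: "arc_matrix n m" and pq: "2 \<le> p" "p < q" "q \<le> n"
  shows "chord_noncrossing n (p - 1) p (act_arcs n p q m)"
  unfolding chord_noncrossing_def
proof (intro allI impI)
  fix u u' a a'
  let ?y = "act_arcs n p q m" and ?nc = "new_crossing n p q m" and ?r = "refl_pos p q"
  assume "u \<in> set (outer_order n (p - 1) p) \<and> u' \<in> set (outer_order n (p - 1) p) \<and>
    outer_rank n (p - 1) u < outer_rank n (p - 1) u' \<and> p - 1 \<le> a \<and> a < a' \<and> a' \<le> p"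
  then have a: "a = p - 1" "a' = p" and pos: "u \<le> n" "u' \<le> n" "u \<noteq> p - 1" "u \<noteq> p" "u' \<noteq> p"
    and order: "u' < u \<and> u < p - 1 \<or> u < p - 1 \<and> p < u' \<or> p < u' \<and> u' < u"
    using pq by (auto simp: mem_outer_order outer_rank_def split: if_splits)
  have pq': "p \<le> q" "q \<le> n" and p1_out: "\<not> (p \<le> p - 1 \<and> p - 1 \<le> q)"
    using pq by auto
  show "?y u a' = 0 \<or> ?y u' a = 0"
  proof (rule ccontr)
    assume "\<not> (?y u a' = 0 \<or> ?y u' a = 0)"
    then have yu: "0 < ?y u p" and yu': "0 < ?y (p - 1) u'"
      using a act_arcs_sym[OF m, of p q u' "p - 1"] by auto
    consider "\<not> (p \<le> u \<and> u \<le> q)" "p \<le> u' \<and> u' \<le> q"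
      | "\<not> (p \<le> u \<and> u \<le> q)" "\<not> (p \<le> u' \<and> u' \<le> q)"
      | "p \<le> u \<and> u \<le> q" "p \<le> u' \<and> u' \<le> q"
      using order by force
    then show False
    proof cases
      case 1
      txt \<open>Both arcs cross the chord of \<open>[p, q]\<close>, and the reflection keeps such arcs
        in order.\<close>
      have "outer_rank n p (p - 1) < outer_rank n p u"
        using pos pq by (auto simp: outer_rank_def)
      then have "u' \<le> p"
        using new_crossing_mono[OF pq'] act_arcs_crossing_pos(1)[OF pq' 1(1) _ _ yu]
          act_arcs_crossing_pos(1)[OF pq' p1_out _ _ yu'] 1(2) pq by simp
      then show False
        using pos(5) 1(2) by simp
    next
      case 2
      obtain w where "p \<le> w" "w \<le> q" "0 < m u w"
        using act_arcs_crossing_pos(2)[OF pq' 2(1) _ _ yu] pq by auto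
      moreover have "0 < m (p - 1) u'"
        using yu' 2(2) p1_out by (simp add: act_arcs_out_out)
      moreover have "chords_cross u w (p - 1) u'"
        using order 2 pos pq \<open>p \<le> w\<close> \<open>w \<le> q\<close> unfolding chords_cross_def
        by (elim disjE) (auto simp: min_def max_def)
      ultimately show False
        using arc_matrix_chords_cross[OF m] by fastforce
    next
      case 3
      have "0 < m (?r u) q"
        using yu 3(1) pq by (simp add: act_arcs_in_in refl_pos_def)
      moreover obtain w where "w \<le> n" "\<not> (p \<le> w \<and> w \<le> q)" "0 < m w (?r u')"
        using act_arcs_crossing_pos(3)[OF pq' p1_out _ _ yu'] 3(2) by auto
      moreover have "p \<le> ?r u" "?r u < ?r u'" "?r u' < q"
        using order 3 pos pq by (auto simp: refl_pos_def)
      then have "chords_cross (?r u) q w (?r u')"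
        using \<open>\<not> (p \<le> w \<and> w \<le> q)\<close> by (auto simp: chords_cross_def)
      ultimately show False
        using arc_matrix_chords_cross[OF m] by fastforce
    qed
  qed
qed

lemma chord_reflection_adjacent: "chord_reflection a (Suc a) = Transposition.transpose a (Suc a)"
  by (auto simp: fun_eq_iff chord_reflection_def refl_pos_def Transposition.transpose_def)

lemma chord_reflection_conj_adjacent:
  assumes "Suc a < b"
  shows "chord_reflection (Suc a) b \<circ> Transposition.transpose a (Suc a) \<circ> chord_reflection (Suc a) b =
    Transposition.transpose a b"
  using assms by (auto simp: fun_eq_iff chord_reflection_def refl_pos_def Transposition.transpose_def)

lemma in_crossings_adjacent_eq:
  assumes a: "Suc a \<le> n" and sym: "\<And>i j. m i j = m j i" and diag: "\<And>i. m i i = 0"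
    and deg: "(\<Sum>w\<le>n. m a w) = (\<Sum>w\<le>n. m (Suc a) w)"
  shows "in_crossings n a (Suc a) m a = in_crossings n a (Suc a) m (Suc a)"
proof -
  have "{a..Suc a} = {a, Suc a}" by auto
  then have "(\<Sum>w\<in>{a..Suc a}. m a w) = (\<Sum>w\<in>{a..Suc a}. m (Suc a) w)"
    using diag sym[of a "Suc a"] by simp
  then show ?thesis
    using deg sum_atMost_split[OF a, of "m a" a] sum_atMost_split[OF a, of "m (Suc a)" a] sym
    by (simp add: in_crossings_def)
qed

lemma act_adjacent_swap:
  assumes a: "Suc a \<le> n" and nc: "chord_noncrossing n a (Suc a) m"
    and sym: "\<And>i j. m i j = m j i" and diag: "\<And>i. m i i = 0" and beyond: "\<And>u c. n < u \<Longrightarrow> m u c = 0"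
    and deg: "(\<Sum>w\<le>n. m a w) = (\<Sum>w\<le>n. m (Suc a) w)"
  shows "act n a (Suc a) (lab, m) = (lab \<circ> Transposition.transpose a (Suc a), m)"
proof -
  have "act_arcs n a (Suc a) m = m"
  proof (rule act_arcs_eqI[OF _ a nc sym beyond])
    have "blocks (in_crossings n a (Suc a) m \<circ> refl_pos a (Suc a)) [a..<Suc (Suc a)] =
        blocks (in_crossings n a (Suc a) m) [a..<Suc (Suc a)]"
      using in_crossings_adjacent_eq[OF a sym diag deg]
      by (intro blocks_cong) (auto simp: refl_pos_def less_Suc_eq simp del: upt_Suc)
    then show "new_crossing n a (Suc a) m = zip (outer_list n a (Suc a) m) (inner_list n a (Suc a) m)"
      by (simp add: new_crossing_eq outer_list_eq inner_list_eq del: upt_Suc)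
    show "m (refl_pos a (Suc a) i) (refl_pos a (Suc a) j) = m i j"
      if "a \<le> i" "i \<le> Suc a" "a \<le> j" "j \<le> Suc a" for i j
      using that diag sym[of a "Suc a"] by (auto simp: refl_pos_def le_Suc_eq)
  qed simp_all
  then show ?thesis
    by (simp add: act_eq chord_reflection_adjacent)
qed

lemma same_orbit_act: "1 \<le> p \<Longrightarrow> p < q \<Longrightarrow> q \<le> n \<Longrightarrow> same_orbit n x (act n p q x)"
  unfolding same_orbit_def cactus_step_def by blast

lemma same_orbit_trans: "same_orbit n x y \<Longrightarrow> same_orbit n y z \<Longrightarrow> same_orbit n x z"
  unfolding same_orbit_def by (rule rtranclp_trans)

lemma same_orbit_swap_positions:
  assumes x: "(lab, m) \<in> arc_diagrams n l linf" and ab: "1 \<le> a" "a < b" "b \<le> n"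
    and deg: "(\<Sum>w\<le>n. m a w) = (\<Sum>w\<le>n. m b w)"
  shows "same_orbit n (lab, m) (lab \<circ> Transposition.transpose a b, m)"
proof -
  have m: "arc_matrix n m"
    using x by (simp add: arc_diagrams_iff)
  consider "b = Suc a" | "Suc a < b"
    using ab by linarith
  then show ?thesis
  proof cases
    case 1
    have "act n a (Suc a) (lab, m) = (lab \<circ> Transposition.transpose a (Suc a), m)"
      using ab 1 arc_matrix_chord_noncrossing[OF m] arc_matrix_sym[OF m] arc_matrix_diag[OF m]
        arc_matrix_beyond[OF m] deg
      by (intro act_adjacent_swap) auto
    then show ?thesis
      using same_orbit_act[of a "Suc a" n "(lab, m)"] ab 1 by simp
  next
    case 2
    define y where "y = act_arcs n (Suc a) b m"
    have step1: "act n (Suc a) b (lab, m) = (lab \<circ> chord_reflection (Suc a) b, y)"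
      by (simp add: act_eq y_def)
    have step2: "act n a (Suc a) (lab \<circ> chord_reflection (Suc a) b, y) =
        (lab \<circ> chord_reflection (Suc a) b \<circ> Transposition.transpose a (Suc a), y)"
    proof (rule act_adjacent_swap)
      show "chord_noncrossing n a (Suc a) y"
        using chord_noncrossing_act_arcs[OF m, of "Suc a" b] ab 2 by (simp add: y_def)
      show "(\<Sum>w\<le>n. y a w) = (\<Sum>w\<le>n. y (Suc a) w)"
        using degree_act_arcs_outside[of "Suc a" b n a m] degree_act_arcs_inside[OF m, of "Suc a" b "Suc a"]
          ab 2 deg by (simp add: y_def refl_pos_def)
    qed (use ab 2 m in \<open>simp_all add: y_def act_arcs_sym act_arcs_diag act_arcs_beyond\<close>)
    have "act_arcs n (Suc a) b y = m"
      using act_arcs_involution[OF _ _ m, of "Suc a" b] ab 2 by (simp add: y_def)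
    then have step3: "act n (Suc a) b (act n a (Suc a) (act n (Suc a) b (lab, m))) =
        (lab \<circ> Transposition.transpose a b, m)"
      unfolding step1 step2 unfolding act_eq using chord_reflection_conj_adjacent[OF 2] by (simp add: comp_assoc)
    have "1 \<le> a" "a < Suc a" "Suc a \<le> n" "1 \<le> Suc a" "Suc a < b" "b \<le> n"
      using ab 2 by simp_all
    then show ?thesis
      using same_orbit_trans[OF same_orbit_trans[OF same_orbit_act same_orbit_act] same_orbit_act] step3
      by metis
  qed
qed

lemma relabel_eq: "relabel \<sigma> (lab, m) = (inv \<sigma> \<circ> lab, m)"
  by (simp add: relabel_def comp_def)

lemma relabel_transpose_arc_diagrams:
  assumes x: "(lab, m) \<in> arc_diagrams n l linf" and ij: "i \<in> {1..n}" "j \<in> {1..n}" and l: "l i = l j"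
  shows "relabel (Transposition.transpose i j) (lab, m) \<in> arc_diagrams n l linf"
proof -
  have "bij_betw (Transposition.transpose i j \<circ> lab) {1..n} {1..n}"
    using x ij by (intro bij_betw_trans) (auto simp: arc_diagrams_iff)
  moreover have "l (Transposition.transpose i j v) = l v" for v
    using l by (cases "v = i"; cases "v = j") auto
  ultimately show ?thesis
    using x ij by (auto simp: relabel_eq arc_diagrams_iff)
qed

lemma relabel_transpose_eq:
  assumes x: "(lab, m) \<in> arc_diagrams n l linf" and pos: "pi \<in> {1..n}" "pj \<in> {1..n}"
  shows "relabel (Transposition.transpose (lab pi) (lab pj)) (lab, m) =
    (lab \<circ> Transposition.transpose pi pj, m)"
proof -
  have inj: "inj_on lab {1..n}" and out: "\<And>pos. pos \<notin> {1..n} \<Longrightarrow> lab pos = 0"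
    and img: "lab ` {1..n} = {1..n}"
    using x by (auto simp: arc_diagrams_iff bij_betw_def)
  have "Transposition.transpose (lab pi) (lab pj) (lab pos) = lab (Transposition.transpose pi pj pos)"
    for pos
  proof (cases "pos \<in> {1..n}")
    case True
    then show ?thesis
      using pos inj by (auto simp: Transposition.transpose_def dest: inj_onD)
  next
    case False
    moreover have "lab pi \<noteq> 0" "lab pj \<noteq> 0"
      using pos img by force+
    ultimately show ?thesis
      using pos out by (auto simp: Transposition.transpose_def)
  qed
  then show ?thesis
    by (simp add: relabel_eq fun_eq_iff)
qed

lemma same_orbit_relabel_transpose:
  assumes x: "(lab, m) \<in> arc_diagrams n l linf" and ij: "i \<in> {1..n}" "j \<in> {1..n}" and l: "l i = l j"
  shows "same_orbit n (lab, m) (relabel (Transposition.transpose i j) (lab, m))"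
proof -
  have "{1..n} \<subseteq> lab ` {1..n}"
    using x by (auto simp: arc_diagrams_iff bij_betw_def)
  then obtain pi pj where pos: "pi \<in> {1..n}" "pj \<in> {1..n}" and lab: "lab pi = i" "lab pj = j"
    using ij by blast
  have deg: "(\<Sum>w\<le>n. m pi w) = (\<Sum>w\<le>n. m pj w)"
    using x pos lab l by (simp add: arc_diagrams_iff)
  consider "pi < pj" | "pj < pi" | "pi = pj"
    by linarith
  then show ?thesis
  proof cases
    case 1
    have "same_orbit n (lab, m) (lab \<circ> Transposition.transpose pi pj, m)"
      by (rule same_orbit_swap_positions[OF x _ 1 _ deg]) (use pos in auto)
    then show ?thesis
      using relabel_transpose_eq[OF x pos] lab by simp
  next
    case 2
    have "same_orbit n (lab, m) (lab \<circ> Transposition.transpose pj pi, m)"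
      by (rule same_orbit_swap_positions[OF x _ 2 _ deg[symmetric]]) (use pos in auto)
    then show ?thesis
      using relabel_transpose_eq[OF x pos] lab by (simp add: transpose_commute)
  next
    case 3
    then show ?thesis
      using lab by (simp add: relabel_eq same_orbit_def)
  qed
qed

lemma same_orbit_relabel_permutes:
  assumes "S \<subseteq> {1..n}" and "\<forall>i\<in>S. \<forall>j\<in>S. l i = l j" and "\<sigma> permutes S"
  shows "\<forall>x\<in>arc_diagrams n l linf. same_orbit n x (relabel \<sigma> x)"
  using assms(3) finite_subset[OF assms(1) finite_atLeastAtMost]
proof (induction rule: permutes_induct)
  case id
  then show ?case
    by (simp add: relabel_def same_orbit_def split: prod.split)
next
  case (swap a b p)
  have ab: "a \<in> {1..n}" "b \<in> {1..n}" "l a = l b"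
    using swap.hyps(1,2) assms(1,2) by blast+
  show ?case
  proof
    fix x assume x: "x \<in> arc_diagrams n l linf"
    obtain lab m where x_eq: "x = (lab, m)"
      by fastforce
    let ?\<tau> = "Transposition.transpose a b"
    have "same_orbit n x (relabel ?\<tau> x)"
      using same_orbit_relabel_transpose[OF _ ab] x unfolding x_eq .
    moreover have "same_orbit n (relabel ?\<tau> x) (relabel p (relabel ?\<tau> x))"
      using swap.IH relabel_transpose_arc_diagrams[OF _ ab] x unfolding x_eq by blast
    moreover have "relabel p (relabel ?\<tau> x) = relabel (?\<tau> \<circ> p) x"
      using permutes_bij[OF swap.hyps(4)] by (simp add: x_eq relabel_eq o_inv_distrib comp_assoc)
    ultimately show "same_orbit n x (relabel (?\<tau> \<circ> p) x)"
      using same_orbit_trans by metis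
  qed
qed

theorem mainTheorem3:
  fixes n :: nat and l :: "nat \<Rightarrow> nat" and linf :: nat
    and x :: diagram and S :: "nat set" and \<sigma> :: "nat \<Rightarrow> nat"
  assumes "x \<in> arc_diagrams n l linf"
    and "S \<subseteq> {1..n}"
    and "\<forall>i\<in>S. \<forall>j\<in>S. l i = l j"
    and "\<sigma> permutes S"
  shows "same_orbit n x (relabel \<sigma> x)"
  using same_orbit_relabel_permutes[OF assms(2-4)] assms(1) by blast

end
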